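(* For every $d\ge 1$, no graph of the form $K_{d+1}\star G_3$ (with $G_3$ any graph on $3$ vertices) is $d$-ball packable.
   Context: $K_n$ is the complete graph on $n$ vertices, $G_3$ an arbitrary graph on $3$ vertices, $\star$ the graph join. A $d$-ball in $\hat{\mathbb R}^d$ is a closed ball, closed exterior of an open ball with $\infty$, or a closed half-space with $\infty$; a $d$-ball packing is a collection of $d$-balls with disjoint interiors; its tangency graph joins balls meeting in exactly one point; a graph is $d$-ball packable if isomorphic to the tangency graph of some $d$-ball packing. *)

theory Defs
  imports "HOL-Analysis.Analysis"
begin

text \<open>The extended space \<open>\<hat>R^d = R^d \<union> {\<infinity>}\<close> is modelled as \<open>(real^'n) option\<close>,
  with \<open>None\<close> the point at infinity and \<open>d = CARD('n)\<close>.\<close>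

definition finite_part :: "(real^'n) option set \<Rightarrow> (real^'n) set" where
  "finite_part S = {x. Some x \<in> S}"

definition is_dball :: "(real^'n) option set \<Rightarrow> bool" where
  "is_dball S \<longleftrightarrow>
     (\<exists>c r. r > 0 \<and> S = Some ` cball c r) \<or>
     (\<exists>c r. r > 0 \<and> S = insert None (Some ` (- ball c r))) \<or>
     (\<exists>a b. a \<noteq> 0 \<and> S = insert None (Some ` {x. a \<bullet> x \<le> b}))"

text \<open>Interiors in \<open>\<hat>R^d\<close>: every neighbourhood of \<infinity> contains points of \<open>R^d\<close>, so two
  d-balls have disjoint interiors in \<open>\<hat>R^d\<close> iff the interiors (in \<open>R^d\<close>) of their finite
  parts are disjoint.\<close>
definition disjoint_interiors :: "(real^'n) option set \<Rightarrow> (real^'n) option set \<Rightarrow> bool" where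
  "disjoint_interiors S T \<longleftrightarrow> interior (finite_part S) \<inter> interior (finite_part T) = {}"

definition ball_packable :: "'v set \<Rightarrow> ('v \<Rightarrow> 'v \<Rightarrow> bool) \<Rightarrow> ('v \<Rightarrow> (real^'n) option set) \<Rightarrow> bool" where
  "ball_packable V E B \<longleftrightarrow>
     inj_on B V \<and> (\<forall>v\<in>V. is_dball (B v)) \<and>
     (\<forall>u\<in>V. \<forall>v\<in>V. u \<noteq> v \<longrightarrow> disjoint_interiors (B u) (B v)) \<and>
     (\<forall>u\<in>V. \<forall>v\<in>V. u \<noteq> v \<longrightarrow> (E u v \<longleftrightarrow> (\<exists>!p. p \<in> B u \<inter> B v)))"

definition dball_packable :: "'n::finite itself \<Rightarrow> 'v set \<Rightarrow> ('v \<Rightarrow> 'v \<Rightarrow> bool) \<Rightarrow> bool" where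
  "dball_packable _ V E \<longleftrightarrow> (\<exists>B :: 'v \<Rightarrow> (real^'n) option set. ball_packable V E B)"

end

theory Submission
  imports Defs
begin

text \<open>Inversive coordinates turn a d-ball into a unit vector \<open>X\<close> of Lorentz space
  \<open>\<real>\<^bsup>d+1,1\<^esup>\<close> with its Lorentzian form \<open>Q\<close>, and two touching d-balls with disjoint interiors into vectors with \<open>Q(X, Y) = -1\<close>.
  The clique \<open>K\<^sub>d\<^sub>+\<^sub>1\<close> thus gives vectors \<open>b\<^sub>j\<close> with Gram matrix \<open>2I - J\<close>, and each ball of
  \<open>G\<^sub>3\<close> a unit vector \<open>p\<close> with \<open>Q(p, b\<^sub>j) = -1\<close> for all \<open>j\<close>.
  For \<open>d \<ge> 2\<close> the Gram matrix is invertible, so the orthogonal complement of the \<open>b\<^sub>j\<close> is a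
  spacelike line and the admissible \<open>p\<close> are \<open>w \<plusminus> e\<close> for a fixed \<open>w\<close> and a unit vector \<open>e\<close> on it:
  at most two of them. For \<open>d = 1\<close> the two balls of the clique are not complementary, so
  \<open>b\<^sub>1 + b\<^sub>2\<close> is a nonzero null vector, and a dimension count leaves at most one admissible \<open>p\<close>.\<close>

section \<open>The Lorentzian form\<close>

type_synonym 'n lorentz = "real \<times> real \<times> (real^'n)"

definition lorentz_form :: "'n::finite lorentz \<Rightarrow> 'n lorentz \<Rightarrow> real" where
  "lorentz_form x y = snd (snd x) \<bullet> snd (snd y) - (fst x * fst (snd y) + fst (snd x) * fst y) / 2"

lemma lorentz_form_commute: "lorentz_form x y = lorentz_form y x"
  unfolding lorentz_form_def by (simp add: inner_commute algebra_simps)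

lemma lorentz_form_zero_left [simp]: "lorentz_form 0 z = 0"
  unfolding lorentz_form_def by simp

lemma lorentz_form_add_left: "lorentz_form (x + y) z = lorentz_form x z + lorentz_form y z"
  unfolding lorentz_form_def by (simp add: inner_add_left algebra_simps add_divide_distrib)

lemma lorentz_form_scaleR_left: "lorentz_form (c *\<^sub>R x) z = c * lorentz_form x z"
  unfolding lorentz_form_def by (simp add: algebra_simps)

lemma lorentz_form_diff_left: "lorentz_form (x - y) z = lorentz_form x z - lorentz_form y z"
  unfolding lorentz_form_def by (simp add: inner_diff_left algebra_simps diff_divide_distrib)

lemma lorentz_form_minus_left: "lorentz_form (- x) z = - lorentz_form x z"
  using lorentz_form_scaleR_left[of "-1" x z] by simp

lemma lorentz_form_sum_left: "lorentz_form (sum f S) z = (\<Sum>i\<in>S. lorentz_form (f i) z)"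
  by (induction S rule: infinite_finite_induct)
    (simp_all add: lorentz_form_add_left)

lemma lorentz_form_add_right: "lorentz_form z (x + y) = lorentz_form z x + lorentz_form z y"
  by (metis lorentz_form_commute lorentz_form_add_left)

lemma lorentz_form_scaleR_right: "lorentz_form z (c *\<^sub>R x) = c * lorentz_form z x"
  by (metis lorentz_form_commute lorentz_form_scaleR_left)

lemma lorentz_form_diff_right: "lorentz_form z (x - y) = lorentz_form z x - lorentz_form z y"
  by (metis lorentz_form_commute lorentz_form_diff_left)

lemma lorentz_form_minus_right: "lorentz_form z (- x) = - lorentz_form z x"
  by (metis lorentz_form_commute lorentz_form_minus_left)

lemma lorentz_form_sum_right: "lorentz_form z (sum f S) = (\<Sum>i\<in>S. lorentz_form z (f i))"
  by (metis (no_types, lifting) lorentz_form_commute lorentz_form_sum_left sum.cong)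

lemmas lorentz_form_linear =
  lorentz_form_add_left lorentz_form_scaleR_left lorentz_form_diff_left lorentz_form_minus_left
  lorentz_form_sum_left lorentz_form_add_right lorentz_form_scaleR_right lorentz_form_diff_right
  lorentz_form_minus_right lorentz_form_sum_right

lemma lorentz_form_nondegenerate:
  fixes n :: "'n::finite lorentz"
  assumes "n \<noteq> 0"
  obtains z where "lorentz_form z n \<noteq> 0"
proof -
  obtain k k' m where n: "n = (k, k', m)" by (cases n) auto
  consider "m \<noteq> 0" | "m = 0" "k \<noteq> 0" | "m = 0" "k = 0" "k' \<noteq> 0"
    using assms n by (auto simp: zero_prod_def)
  then show thesis
  proof cases
    case 1
    then show thesis by (intro that[of "(0, 0, m)"]) (simp add: lorentz_form_def n)
  next
    case 2
    then show thesis by (intro that[of "(0, 1, 0)"]) (simp add: lorentz_form_def n)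
  next
    case 3
    then show thesis by (intro that[of "(1, 0, 0)"]) (simp add: lorentz_form_def n)
  qed
qed

lemma card_independent_lorentz_le:
  fixes S :: "'n::finite lorentz set"
  assumes "independent S"
  shows "card S \<le> CARD('n) + 2"
  using independent_bound[OF assms] by simp

lemma scaleR_multiple_if_combination_eq_0:
  fixes u v :: "'a::real_vector"
  assumes "\<alpha> *\<^sub>R u + \<beta> *\<^sub>R v = 0" "\<alpha> \<noteq> 0"
  shows "u = (- \<beta> / \<alpha>) *\<^sub>R v"
proof -
  have "u = inverse \<alpha> *\<^sub>R (\<alpha> *\<^sub>R u)" using assms(2) by simp
  also have "\<alpha> *\<^sub>R u = - (\<beta> *\<^sub>R v)" using assms(1) by (simp add: eq_neg_iff_add_eq_0)
  finally show ?thesis by (simp add: divide_inverse_commute)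
qed

section \<open>Unit vectors tangent to a mutually tangent family\<close>

definition mutually_tangent :: "'a set \<Rightarrow> ('a \<Rightarrow> 'n::finite lorentz) \<Rightarrow> bool" where
  "mutually_tangent A b \<longleftrightarrow>
     (\<forall>i\<in>A. \<forall>j\<in>A. lorentz_form (b i) (b j) = (if i = j then 1 else -1))"

definition tangent_to_all :: "'a set \<Rightarrow> ('a \<Rightarrow> 'n::finite lorentz) \<Rightarrow> 'n lorentz \<Rightarrow> bool" where
  "tangent_to_all A b p \<longleftrightarrow> lorentz_form p p = 1 \<and> (\<forall>j\<in>A. lorentz_form p (b j) = -1)"

lemma lorentz_form_mutually_tangent_combination:
  assumes b: "mutually_tangent A b" and "finite A" "j \<in> A"
  shows "lorentz_form (\<Sum>i\<in>A. \<alpha> i *\<^sub>R b i) (b j) = 2 * \<alpha> j - (\<Sum>i\<in>A. \<alpha> i)"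
proof -
  have "lorentz_form (\<Sum>i\<in>A. \<alpha> i *\<^sub>R b i) (b j) = (\<Sum>i\<in>A. (if i = j then 2 * \<alpha> i else 0) - \<alpha> i)"
    using b \<open>j \<in> A\<close> unfolding mutually_tangent_def
    by (auto simp: lorentz_form_linear intro: sum.cong)
  also have "\<dots> = 2 * \<alpha> j - (\<Sum>i\<in>A. \<alpha> i)"
    using assms(2,3) by (simp add: sum_subtractf)
  finally show ?thesis .
qed

lemma mutually_tangent_orthogonal_combination_eq_0:
  assumes b: "mutually_tangent A b" and fin: "finite A" and "card A \<noteq> 2"
    and orth: "\<And>j. j \<in> A \<Longrightarrow> lorentz_form (\<Sum>i\<in>A. \<alpha> i *\<^sub>R b i) (b j) = 0"
    and "i \<in> A"
  shows "\<alpha> i = 0"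
proof -
  define S where "S = (\<Sum>i\<in>A. \<alpha> i)"
  have \<alpha>: "\<alpha> j = S / 2" if "j \<in> A" for j
    using orth[OF that] lorentz_form_mutually_tangent_combination[OF b fin that]
    unfolding S_def by simp
  then have "S = real (card A) * S / 2"
    unfolding S_def by (subst sum.cong[OF refl \<alpha>]) (simp_all add: S_def)
  then have "S * (real (card A) - 2) = 0" by (simp add: algebra_simps)
  with \<open>card A \<noteq> 2\<close> have "S = 0" by simp
  then show ?thesis using \<alpha>[OF \<open>i \<in> A\<close>] by simp
qed

lemma mutually_tangent_inj_on:
  assumes "mutually_tangent A b"
  shows "inj_on b A"
proof (rule inj_onI)
  fix i j assume "i \<in> A" "j \<in> A" "b i = b j"
  then show "i = j" using assms unfolding mutually_tangent_def by (metis one_neq_neg_one)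
qed

text \<open>For \<open>d \<ge> 2\<close> the orthogonal complement of a mutually tangent \<open>(d+1)\<close>-family is a line:
  otherwise the family together with two independent orthogonal vectors would be
  \<open>d + 3\<close> independent vectors in a \<open>(d+2)\<close>-dimensional space.\<close>

lemma mutually_tangent_orthogonal_collinear:
  fixes b :: "'a \<Rightarrow> 'n::finite lorentz"
  assumes b: "mutually_tangent A b" and fin: "finite A"
    and card: "card A = CARD('n) + 1" and dim: "CARD('n) \<ge> 2"
    and u: "\<And>j. j \<in> A \<Longrightarrow> lorentz_form u (b j) = 0"
    and v: "\<And>j. j \<in> A \<Longrightarrow> lorentz_form v (b j) = 0" and "v \<noteq> 0"
  obtains l where "u = l *\<^sub>R v"
proof (rule ccontr)
  assume "\<not> thesis"
  then have not_multiple: "u \<noteq> l *\<^sub>R v" for l using that by blast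
  then have "u \<noteq> v" by (metis scaleR_one)
  have injb: "inj_on b A" using b by (rule mutually_tangent_inj_on)
  have "u \<notin> b ` A" "v \<notin> b ` A"
    using u v b unfolding mutually_tangent_def by fastforce+
  define S where "S = insert u (insert v (b ` A))"
  have "independent S"
  proof (rule independent_if_scalars_zero)
    show "finite S" using fin by (simp add: S_def)
    fix f x assume sum0: "(\<Sum>x\<in>S. f x *\<^sub>R x) = 0" and "x \<in> S"
    define w where "w = (\<Sum>i\<in>A. f (b i) *\<^sub>R b i)"
    have "(\<Sum>x\<in>S. f x *\<^sub>R x) = f u *\<^sub>R u + f v *\<^sub>R v + w"
      unfolding S_def w_def using fin \<open>u \<noteq> v\<close> \<open>u \<notin> b ` A\<close> \<open>v \<notin> b ` A\<close>
      by (simp add: sum.reindex[OF injb] add.assoc)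
    then have w: "w = - (f u *\<^sub>R u + f v *\<^sub>R v)" using sum0 by (metis add_eq_0_iff)
    have fb: "f (b i) = 0" if "i \<in> A" for i
    proof (rule mutually_tangent_orthogonal_combination_eq_0[OF b fin _ _ that])
      show "card A \<noteq> 2" using card dim by simp
      show "lorentz_form (\<Sum>i\<in>A. f (b i) *\<^sub>R b i) (b j) = 0" if "j \<in> A" for j
        using u[OF that] v[OF that] w unfolding w_def by (simp add: lorentz_form_linear)
    qed
    then have "w = 0" unfolding w_def by simp
    then have uv: "f u *\<^sub>R u + f v *\<^sub>R v = 0" using w by (metis neg_0_equal_iff_equal)
    have "f u = 0"
      using scaleR_multiple_if_combination_eq_0[OF uv] not_multiple by blast
    moreover have "f v = 0" using uv \<open>f u = 0\<close> \<open>v \<noteq> 0\<close> by simp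
    ultimately show "f x = 0" using \<open>x \<in> S\<close> fb unfolding S_def by auto
  qed
  then have "card S \<le> CARD('n) + 2" by (rule card_independent_lorentz_le)
  moreover have "card S = CARD('n) + 3"
    unfolding S_def using fin \<open>u \<noteq> v\<close> \<open>u \<notin> b ` A\<close> \<open>v \<notin> b ` A\<close>
    by (simp add: card_image[OF injb] card)
  ultimately show False by simp
qed

lemma tangent_to_all_at_most_two_dim_ge2:
  fixes b :: "'a \<Rightarrow> 'n::finite lorentz"
  assumes b: "mutually_tangent A b" and fin: "finite A"
    and card: "card A = CARD('n) + 1" and dim: "CARD('n) \<ge> 2"
    and tangent: "\<And>p. p \<in> {x, y, z} \<Longrightarrow> tangent_to_all A b p"
  shows "x = y \<or> y = z \<or> x = z"
proof -
  define d where "d = real (card A)"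
  have "d \<ge> 3" using card dim unfolding d_def by simp
  define w where "w = (1 / (d - 2)) *\<^sub>R (\<Sum>i\<in>A. b i)"
  have wb: "lorentz_form w (b j) = -1" if "j \<in> A" for j
    using lorentz_form_mutually_tangent_combination[OF b fin that, of "\<lambda>_. 1"] \<open>d \<ge> 3\<close>
    by (simp add: w_def d_def lorentz_form_linear divide_simps)
  have pw: "lorentz_form p w = - d / (d - 2)" if "p \<in> {x, y, z}" for p
    using tangent[OF that] by (simp add: w_def d_def lorentz_form_linear tangent_to_all_def)
  have ww: "lorentz_form w w = - d / (d - 2)"
    using wb by (simp add: w_def d_def lorentz_form_linear lorentz_form_commute[of _ w])
  define s where "s = 1 + d / (d - 2)"
  have "s > 0" unfolding s_def using \<open>d \<ge> 3\<close> by (simp add: add_pos_nonneg)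
  have orth: "lorentz_form (p - w) (b j) = 0" if "p \<in> {x, y, z}" "j \<in> A" for p j
    using tangent[OF that(1)] wb[OF that(2)] that(2)
    by (simp add: lorentz_form_linear tangent_to_all_def)
  have norm: "lorentz_form (p - w) (p - w) = s" if "p \<in> {x, y, z}" for p
    using tangent[OF that] pw[OF that] ww
    by (simp add: lorentz_form_linear lorentz_form_commute[of w p] s_def tangent_to_all_def)
  have "x - w \<noteq> 0" using norm[of x] \<open>s > 0\<close> by auto
  have sign: "p - w = x - w \<or> p - w = - (x - w)" if p: "p \<in> {x, y, z}" for p
  proof -
    obtain l where l: "p - w = l *\<^sub>R (x - w)"
      by (rule mutually_tangent_orthogonal_collinear[OF b fin card dim, of "p - w" "x - w"])
        (use orth[OF p] orth[of x] \<open>x - w \<noteq> 0\<close> in simp_all)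
    have "s = lorentz_form (l *\<^sub>R (x - w)) (l *\<^sub>R (x - w))" using norm[OF p] l by simp
    also have "\<dots> = l\<^sup>2 * s"
      using norm[of x] by (simp add: lorentz_form_scaleR_left lorentz_form_scaleR_right power2_eq_square)
    finally have "l = 1 \<or> l = -1" using \<open>s > 0\<close> by (simp add: power2_eq_1_iff)
    then show ?thesis using l by auto
  qed
  show ?thesis using sign[of y] sign[of z] by (metis diff_add_cancel insertCI)
qed

text \<open>In dimension one a vector orthogonal to a unit vector \<open>e\<close> and to a nonzero null vector
  \<open>n \<perp> e\<close> is a multiple of \<open>n\<close>: otherwise \<open>e\<close>, \<open>u\<close>, \<open>n\<close> and any \<open>z\<close> with \<open>Q(z, n) \<noteq> 0\<close> would be
  four independent vectors in a three-dimensional space.\<close>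

lemma null_orthogonal_collinear_dim1:
  fixes e n u :: "'n::finite lorentz"
  assumes dim: "CARD('n) = 1" and "n \<noteq> 0"
    and e: "lorentz_form e e = 1" "lorentz_form e n = 0"
    and n: "lorentz_form n n = 0"
    and u: "lorentz_form u e = 0" "lorentz_form u n = 0"
  obtains l where "u = l *\<^sub>R n"
proof (rule ccontr)
  assume "\<not> thesis"
  then have not_multiple: "u \<noteq> l *\<^sub>R n" for l using that by blast
  obtain z where z: "lorentz_form z n \<noteq> 0" using lorentz_form_nondegenerate[OF \<open>n \<noteq> 0\<close>] .
  have distinct: "distinct [e, u, n, z]"
    using e n u z not_multiple[of 1] lorentz_form_commute[of e n] by auto
  define S where "S = {e, u, n, z}"
  have "independent S"
  proof (rule independent_if_scalars_zero)
    show "finite S" by (simp add: S_def)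
    fix f p assume sum0: "(\<Sum>x\<in>S. f x *\<^sub>R x) = 0" and "p \<in> S"
    have comb: "f e *\<^sub>R e + f u *\<^sub>R u + f n *\<^sub>R n + f z *\<^sub>R z = 0"
      using sum0 distinct unfolding S_def by (simp add: add.assoc)
    have "f z * lorentz_form z n = 0"
      using arg_cong[OF comb, of "\<lambda>x. lorentz_form x n"] e n u
      by (simp add: lorentz_form_linear)
    then have "f z = 0" using z by simp
    moreover have "f e = 0"
      using arg_cong[OF comb, of "\<lambda>x. lorentz_form x e"] e u \<open>f z = 0\<close>
      by (simp add: lorentz_form_linear lorentz_form_commute[of n e])
    ultimately have un: "f u *\<^sub>R u + f n *\<^sub>R n = 0" using comb by simp
    then have "f u = 0" using scaleR_multiple_if_combination_eq_0 not_multiple by blast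
    then have "f n = 0" using un \<open>n \<noteq> 0\<close> by simp
    show "f p = 0"
      using \<open>p \<in> S\<close> \<open>f z = 0\<close> \<open>f e = 0\<close> \<open>f u = 0\<close> \<open>f n = 0\<close> unfolding S_def by auto
  qed
  then have "card S \<le> CARD('n) + 2" by (rule card_independent_lorentz_le)
  moreover have "card S = 4" unfolding S_def using distinct by simp
  ultimately show False using dim by simp
qed

lemma tangent_to_all_unique_dim1:
  fixes b :: "'a \<Rightarrow> 'n::finite lorentz"
  assumes dim: "CARD('n) = 1"
    and b: "mutually_tangent {a\<^sub>1, a\<^sub>2} b" "a\<^sub>1 \<noteq> a\<^sub>2" "b a\<^sub>2 \<noteq> - b a\<^sub>1"
    and x: "tangent_to_all {a\<^sub>1, a\<^sub>2} b x" and y: "tangent_to_all {a\<^sub>1, a\<^sub>2} b y"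
  shows "x = y"
proof -
  define n where "n = b a\<^sub>1 + b a\<^sub>2"
  have "n \<noteq> 0" using b(3) unfolding n_def by (metis add_eq_0_iff)
  have gram: "lorentz_form (b a\<^sub>1) (b a\<^sub>1) = 1" "lorentz_form (b a\<^sub>2) (b a\<^sub>2) = 1"
    "lorentz_form (b a\<^sub>1) (b a\<^sub>2) = -1" "lorentz_form (b a\<^sub>2) (b a\<^sub>1) = -1"
    using b(1,2) unfolding mutually_tangent_def by auto
  have nb: "lorentz_form n (b a\<^sub>1) = 0" and nn: "lorentz_form n n = 0"
    using gram by (simp_all add: n_def lorentz_form_linear)
  have xn: "lorentz_form x n = -2" and yn: "lorentz_form y n = -2"
    using x y by (simp_all add: n_def lorentz_form_linear tangent_to_all_def)
  obtain l where l: "y - x = l *\<^sub>R n"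
  proof (rule null_orthogonal_collinear_dim1[OF dim \<open>n \<noteq> 0\<close> gram(1) _ nn])
    show "lorentz_form (b a\<^sub>1) n = 0" using nb by (simp add: lorentz_form_commute)
    show "lorentz_form (y - x) (b a\<^sub>1) = 0" "lorentz_form (y - x) n = 0"
      using x y xn yn by (simp_all add: lorentz_form_linear tangent_to_all_def)
  qed
  have "lorentz_form y y = lorentz_form x x + 2 * l * lorentz_form x n + l\<^sup>2 * lorentz_form n n"
    using l[unfolded diff_eq_eq]
    by (simp add: lorentz_form_linear lorentz_form_commute[of n x] algebra_simps power2_eq_square)
  then have "l = 0" using x y xn nn by (simp add: tangent_to_all_def)
  then show "x = y" using l by simp
qed

lemma tangent_to_all_at_most_two:
  fixes b :: "'a \<Rightarrow> 'n::finite lorentz"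
  assumes b: "mutually_tangent A b" and fin: "finite A" and card: "card A = CARD('n) + 1"
    and not_opposite: "\<And>i j. i \<in> A \<Longrightarrow> j \<in> A \<Longrightarrow> i \<noteq> j \<Longrightarrow> b j \<noteq> - b i"
    and tangent: "\<And>p. p \<in> {x, y, z} \<Longrightarrow> tangent_to_all A b p"
  shows "x = y \<or> y = z \<or> x = z"
proof (cases "CARD('n) \<ge> 2")
  case True
  then show ?thesis using tangent_to_all_at_most_two_dim_ge2[OF b fin card] tangent by blast
next
  case False
  then have dim: "CARD('n) = 1" using zero_less_card_finite[where 'a='n] by linarith
  then have "card A = 2" using card by simp
  then obtain a\<^sub>1 a\<^sub>2 where A: "A = {a\<^sub>1, a\<^sub>2}" "a\<^sub>1 \<noteq> a\<^sub>2"
    by (meson card_2_iff)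
  have "x = y"
  proof (rule tangent_to_all_unique_dim1[OF dim _ A(2)])
    show "mutually_tangent {a\<^sub>1, a\<^sub>2} b" using b A(1) by simp
    show "b a\<^sub>2 \<noteq> - b a\<^sub>1" using not_opposite A by simp
    show "tangent_to_all {a\<^sub>1, a\<^sub>2} b x" "tangent_to_all {a\<^sub>1, a\<^sub>2} b y"
      using tangent A(1) by simp_all
  qed
  then show ?thesis by simp
qed

section \<open>Inversive coordinates of d-balls\<close>

text \<open>Inversive coordinates \<open>(1/r, (|c|\<^sup>2 - r\<^sup>2)/r, c/r)\<close> (curvature, co-curvature,
  curvature times centre) of the ball with centre \<open>c\<close> and radius \<open>r\<close>; the closed exterior of
  that ball gets the opposite vector, and a half-space the limit of the coordinates of
  balls growing into it.\<close>

definition ball_coords :: "real^'n::finite \<Rightarrow> real \<Rightarrow> 'n lorentz" where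
  "ball_coords c r = (1 / r, (c \<bullet> c - r * r) / r, (1 / r) *\<^sub>R c)"

definition halfspace_coords :: "real^'n::finite \<Rightarrow> real \<Rightarrow> 'n lorentz" where
  "halfspace_coords a b = (0, - 2 * b / norm a, - (1 / norm a) *\<^sub>R a)"

lemma lorentz_form_ball_coords:
  assumes "r\<^sub>1 > 0" "r\<^sub>2 > 0"
  shows "lorentz_form (ball_coords c\<^sub>1 r\<^sub>1) (ball_coords c\<^sub>2 r\<^sub>2) =
    (r\<^sub>1 * r\<^sub>1 + r\<^sub>2 * r\<^sub>2 - (dist c\<^sub>1 c\<^sub>2)\<^sup>2) / (2 * r\<^sub>1 * r\<^sub>2)"
proof -
  have dist: "(dist c\<^sub>1 c\<^sub>2)\<^sup>2 = c\<^sub>1 \<bullet> c\<^sub>1 - 2 * (c\<^sub>1 \<bullet> c\<^sub>2) + c\<^sub>2 \<bullet> c\<^sub>2"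
    by (simp add: dist_norm power2_norm_eq_inner inner_diff_left inner_diff_right inner_commute)
  show ?thesis
    unfolding lorentz_form_def ball_coords_def dist using assms by (simp add: field_simps)
qed

lemma lorentz_form_ball_coords_self:
  "r > 0 \<Longrightarrow> lorentz_form (ball_coords c r) (ball_coords c r) = 1"
  by (simp add: lorentz_form_ball_coords power2_eq_square)

lemma lorentz_form_halfspace_coords_self:
  "a \<noteq> 0 \<Longrightarrow> lorentz_form (halfspace_coords a b) (halfspace_coords a b) = 1"
  unfolding lorentz_form_def halfspace_coords_def by (simp add: dot_square_norm power2_eq_square)

lemma lorentz_form_ball_halfspace_coords:
  assumes "r > 0" "a \<noteq> 0"
  shows "lorentz_form (ball_coords c r) (halfspace_coords a b) = (b - a \<bullet> c) / (r * norm a)"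
  unfolding lorentz_form_def ball_coords_def halfspace_coords_def using assms
  by (simp add: field_simps inner_commute)

lemma lorentz_form_halfspace_coords:
  assumes "a\<^sub>1 \<noteq> 0" "a\<^sub>2 \<noteq> 0"
  shows "lorentz_form (halfspace_coords a\<^sub>1 b\<^sub>1) (halfspace_coords a\<^sub>2 b\<^sub>2) =
    (a\<^sub>1 \<bullet> a\<^sub>2) / (norm a\<^sub>1 * norm a\<^sub>2)"
  unfolding lorentz_form_def halfspace_coords_def using assms by (simp add: field_simps)

lemma tangent_balls_coords:
  fixes c\<^sub>1 c\<^sub>2 :: "real^'n::finite"
  assumes r: "r\<^sub>1 > 0" "r\<^sub>2 > 0" and disj: "ball c\<^sub>1 r\<^sub>1 \<inter> ball c\<^sub>2 r\<^sub>2 = {}"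
    and p: "p \<in> cball c\<^sub>1 r\<^sub>1" "p \<in> cball c\<^sub>2 r\<^sub>2"
  shows "lorentz_form (ball_coords c\<^sub>1 r\<^sub>1) (ball_coords c\<^sub>2 r\<^sub>2) = -1"
proof -
  have "dist c\<^sub>1 c\<^sub>2 \<le> r\<^sub>1 + r\<^sub>2"
    using p dist_triangle[of c\<^sub>1 c\<^sub>2 p] by (simp add: dist_commute)
  moreover have "\<not> dist c\<^sub>1 c\<^sub>2 < r\<^sub>1 + r\<^sub>2"
  proof
    assume lt: "dist c\<^sub>1 c\<^sub>2 < r\<^sub>1 + r\<^sub>2"
    define t where "t = r\<^sub>1 / (r\<^sub>1 + r\<^sub>2)"
    define q where "q = c\<^sub>1 + t *\<^sub>R (c\<^sub>2 - c\<^sub>1)"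
    have t: "0 < t" "t < 1" "1 - t = r\<^sub>2 / (r\<^sub>1 + r\<^sub>2)"
      using r unfolding t_def by (auto simp: field_simps)
    have "dist c\<^sub>1 q = t * dist c\<^sub>1 c\<^sub>2"
      unfolding q_def using t by (simp add: dist_norm norm_minus_commute)
    also have "\<dots> < t * (r\<^sub>1 + r\<^sub>2)" using lt t by simp
    also have "\<dots> = r\<^sub>1" using r unfolding t_def by simp
    finally have "q \<in> ball c\<^sub>1 r\<^sub>1" by simp
    have "c\<^sub>2 - q = (1 - t) *\<^sub>R (c\<^sub>2 - c\<^sub>1)" unfolding q_def by (simp add: algebra_simps)
    then have "dist c\<^sub>2 q = (1 - t) * dist c\<^sub>1 c\<^sub>2"
      using t r by (simp add: dist_norm norm_minus_commute)
    also have "\<dots> < (1 - t) * (r\<^sub>1 + r\<^sub>2)" by (rule mult_strict_left_mono) (use lt t in auto)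
    also have "\<dots> = r\<^sub>2" using r t(3) by simp
    finally have "q \<in> ball c\<^sub>2 r\<^sub>2" by simp
    then show False using \<open>q \<in> ball c\<^sub>1 r\<^sub>1\<close> disj by blast
  qed
  ultimately have "dist c\<^sub>1 c\<^sub>2 = r\<^sub>1 + r\<^sub>2" by simp
  then show ?thesis using r by (simp add: lorentz_form_ball_coords field_simps power2_eq_square)
qed

lemma tangent_ball_exterior_coords:
  fixes c\<^sub>1 c\<^sub>2 :: "real^'n::finite"
  assumes r: "r\<^sub>1 > 0" "r\<^sub>2 > 0" and disj: "ball c\<^sub>1 r\<^sub>1 \<inter> - cball c\<^sub>2 r\<^sub>2 = {}"
    and p: "p \<in> cball c\<^sub>1 r\<^sub>1" "p \<notin> ball c\<^sub>2 r\<^sub>2"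
  shows "lorentz_form (ball_coords c\<^sub>1 r\<^sub>1) (- ball_coords c\<^sub>2 r\<^sub>2) = -1"
proof -
  have "ball c\<^sub>1 r\<^sub>1 \<subseteq> cball c\<^sub>2 r\<^sub>2" using disj by blast
  then have "dist c\<^sub>1 c\<^sub>2 + r\<^sub>1 \<le> r\<^sub>2" using r by (simp add: ball_subset_cball_iff)
  moreover have "r\<^sub>2 \<le> dist c\<^sub>1 c\<^sub>2 + r\<^sub>1"
    using p dist_triangle[of c\<^sub>2 p c\<^sub>1] by (simp add: dist_commute)
  ultimately have "dist c\<^sub>1 c\<^sub>2 = r\<^sub>2 - r\<^sub>1" by simp
  then have "lorentz_form (ball_coords c\<^sub>1 r\<^sub>1) (- ball_coords c\<^sub>2 r\<^sub>2) =
    - ((r\<^sub>1 * r\<^sub>1 + r\<^sub>2 * r\<^sub>2 - (r\<^sub>2 - r\<^sub>1)\<^sup>2) / (2 * r\<^sub>1 * r\<^sub>2))"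
    using r by (simp add: lorentz_form_minus_right lorentz_form_ball_coords)
  also have "\<dots> = -1" using r by (simp add: field_simps power2_eq_square)
  finally show ?thesis .
qed

lemma tangent_ball_halfspace_coords:
  fixes c a :: "real^'n::finite"
  assumes r: "r > 0" and a: "a \<noteq> 0" and disj: "ball c r \<inter> {x. a \<bullet> x < b} = {}"
    and p: "p \<in> cball c r" "a \<bullet> p \<le> b"
  shows "lorentz_form (ball_coords c r) (halfspace_coords a b) = -1"
proof -
  have "a \<bullet> c = a \<bullet> p + a \<bullet> (c - p)" by (simp add: inner_diff_right)
  also have "\<dots> \<le> b + norm a * norm (c - p)"
    using p(2) norm_cauchy_schwarz[of a "c - p"] by simp
  also have "\<dots> \<le> b + norm a * r" using p(1) by (simp add: dist_norm mult_left_mono)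
  finally have le: "a \<bullet> c \<le> b + r * norm a" by (simp add: mult.commute)
  have "cball c r \<inter> {x. a \<bullet> x < b} = {}"
    using disj open_Int_closure_eq_empty[OF open_halfspace_lt, of a b "ball c r"] r
    by (simp add: Int_commute)
  moreover have "c - (r / norm a) *\<^sub>R a \<in> cball c r" using r a by (simp add: dist_norm)
  ultimately have "\<not> a \<bullet> (c - (r / norm a) *\<^sub>R a) < b" by blast
  then have "b \<le> a \<bullet> (c - (r / norm a) *\<^sub>R a)" by simp
  also have "\<dots> = a \<bullet> c - r * norm a"
    using a by (simp add: inner_diff_right dot_square_norm power2_eq_square)
  finally have "b - a \<bullet> c = - (r * norm a)" using le by simp
  then show ?thesis using r a by (simp add: lorentz_form_ball_halfspace_coords)
qed

lemma eventually_inner_less_along_ray: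
  fixes a v p :: "'a::real_inner"
  assumes "a \<bullet> v < 0"
  shows "eventually (\<lambda>t. a \<bullet> (p + t *\<^sub>R v) < b) at_top"
  using eventually_gt_at_top[of "(b - a \<bullet> p) / (a \<bullet> v)"]
  by eventually_elim (use assms in \<open>simp add: inner_add_right neg_divide_less_eq algebra_simps\<close>)

lemma tangent_halfspaces_coords:
  fixes a\<^sub>1 a\<^sub>2 :: "real^'n::finite"
  assumes a: "a\<^sub>1 \<noteq> 0" "a\<^sub>2 \<noteq> 0"
    and disj: "{x. a\<^sub>1 \<bullet> x < b\<^sub>1} \<inter> {x. a\<^sub>2 \<bullet> x < b\<^sub>2} = {}"
  shows "lorentz_form (halfspace_coords a\<^sub>1 b\<^sub>1) (halfspace_coords a\<^sub>2 b\<^sub>2) = -1"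
proof -
  have n: "norm a\<^sub>1 > 0" "norm a\<^sub>2 > 0" using a by auto
  have "a\<^sub>1 \<bullet> a\<^sub>2 = - (norm a\<^sub>1 * norm a\<^sub>2)"
  proof (rule ccontr)
    assume "a\<^sub>1 \<bullet> a\<^sub>2 \<noteq> - (norm a\<^sub>1 * norm a\<^sub>2)"
    moreover have "- (a\<^sub>1 \<bullet> a\<^sub>2) \<le> norm a\<^sub>1 * norm a\<^sub>2"
      using norm_cauchy_schwarz[of "- a\<^sub>1" a\<^sub>2] by simp
    ultimately have K: "norm a\<^sub>1 * norm a\<^sub>2 + a\<^sub>1 \<bullet> a\<^sub>2 > 0" by linarith
    define v where "v = - (norm a\<^sub>2 *\<^sub>R a\<^sub>1 + norm a\<^sub>1 *\<^sub>R a\<^sub>2)"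
    have "a\<^sub>1 \<bullet> v = - norm a\<^sub>1 * (norm a\<^sub>1 * norm a\<^sub>2 + a\<^sub>1 \<bullet> a\<^sub>2)"
      "a\<^sub>2 \<bullet> v = - norm a\<^sub>2 * (norm a\<^sub>1 * norm a\<^sub>2 + a\<^sub>1 \<bullet> a\<^sub>2)"
      unfolding v_def by (simp_all add: inner_add_right dot_square_norm power2_eq_square
          algebra_simps inner_commute)
    then have "a\<^sub>1 \<bullet> v < 0" "a\<^sub>2 \<bullet> v < 0" using n K by (simp_all add: mult_pos_pos)
    then have "eventually (\<lambda>t. a\<^sub>1 \<bullet> (0 + t *\<^sub>R v) < b\<^sub>1 \<and> a\<^sub>2 \<bullet> (0 + t *\<^sub>R v) < b\<^sub>2) at_top"
      by (intro eventually_conj eventually_inner_less_along_ray)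
    then obtain t where "a\<^sub>1 \<bullet> (t *\<^sub>R v) < b\<^sub>1" "a\<^sub>2 \<bullet> (t *\<^sub>R v) < b\<^sub>2"
      using eventually_happens'[OF trivial_limit_at_top_linorder] by auto
    then show False using disj by blast
  qed
  then show ?thesis using n a by (simp add: lorentz_form_halfspace_coords)
qed

lemma exteriors_of_cballs_intersect:
  fixes c\<^sub>1 c\<^sub>2 :: "'a::{real_normed_vector, perfect_space}"
  shows "- cball c\<^sub>1 r\<^sub>1 \<inter> - cball c\<^sub>2 r\<^sub>2 \<noteq> {}"
proof
  assume "- cball c\<^sub>1 r\<^sub>1 \<inter> - cball c\<^sub>2 r\<^sub>2 = {}"
  then have "UNIV = cball c\<^sub>1 r\<^sub>1 \<union> cball c\<^sub>2 r\<^sub>2" by blast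
  then show False by (metis bounded_Un bounded_cball not_bounded_UNIV)
qed

lemma exterior_of_cball_halfspace_intersect:
  fixes c a :: "'a::real_inner"
  assumes "a \<noteq> 0"
  shows "- cball c r \<inter> {x. a \<bullet> x < b} \<noteq> {}"
proof -
  have "eventually (\<lambda>t. r / norm a < t \<and> a \<bullet> (c + t *\<^sub>R (- a)) < b) at_top"
    using assms by (intro eventually_conj eventually_gt_at_top eventually_inner_less_along_ray) simp
  then obtain t where t: "r / norm a < t" "a \<bullet> (c + t *\<^sub>R (- a)) < b"
    using eventually_happens'[OF trivial_limit_at_top_linorder] by auto
  have "r < t * norm a" using t(1) assms by (simp add: divide_less_eq)
  also have "\<dots> \<le> dist c (c + t *\<^sub>R (- a))"
    by (simp add: dist_norm mult_right_mono[OF abs_ge_self norm_ge_zero])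
  finally have "c + t *\<^sub>R (- a) \<in> - cball c r" by simp
  with t(2) show ?thesis by blast
qed

definition dball_of_coords :: "'n::finite lorentz \<Rightarrow> (real^'n) option set" where
  "dball_of_coords X =
     (if fst X > 0 then Some ` cball ((1 / fst X) *\<^sub>R snd (snd X)) (1 / fst X)
      else if fst X < 0
      then insert None (Some ` (- ball ((1 / fst X) *\<^sub>R snd (snd X)) (- 1 / fst X)))
      else insert None (Some ` {x. (- snd (snd X)) \<bullet> x \<le> - fst (snd X) / 2}))"

lemma dball_of_ball_coords: "r > 0 \<Longrightarrow> dball_of_coords (ball_coords c r) = Some ` cball c r"
  unfolding dball_of_coords_def ball_coords_def by simp

lemma dball_of_neg_ball_coords:
  "r > 0 \<Longrightarrow> dball_of_coords (- ball_coords c r) = insert None (Some ` (- ball c r))"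
  unfolding dball_of_coords_def ball_coords_def by simp

lemma dball_of_halfspace_coords:
  assumes "a \<noteq> 0"
  shows "dball_of_coords (halfspace_coords a b) = insert None (Some ` {x. a \<bullet> x \<le> b})"
proof -
  have "{x. (1 / norm a) *\<^sub>R a \<bullet> x \<le> b / norm a} = {x. a \<bullet> x \<le> b}"
    using assms by (auto simp: divide_le_cancel field_simps)
  then show ?thesis unfolding dball_of_coords_def halfspace_coords_def by simp
qed

lemma dball_of_neg_halfspace_coords:
  assumes "a \<noteq> 0"
  shows "dball_of_coords (- halfspace_coords a b) = insert None (Some ` {x. a \<bullet> x \<ge> b})"
proof -
  have "{x. - ((1 / norm a) *\<^sub>R a \<bullet> x) \<le> - (b / norm a)} = {x. a \<bullet> x \<ge> b}"
    using assms by (auto simp: divide_le_cancel field_simps)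
  then show ?thesis unfolding dball_of_coords_def halfspace_coords_def by simp
qed

definition dball_coords :: "(real^'n::finite) option set \<Rightarrow> 'n lorentz \<Rightarrow> bool" where
  "dball_coords S X \<longleftrightarrow>
     (\<exists>c r. r > 0 \<and> S = Some ` cball c r \<and> X = ball_coords c r) \<or>
     (\<exists>c r. r > 0 \<and> S = insert None (Some ` (- ball c r)) \<and> X = - ball_coords c r) \<or>
     (\<exists>a b. a \<noteq> 0 \<and> S = insert None (Some ` {x. a \<bullet> x \<le> b}) \<and> X = halfspace_coords a b)"

lemma is_dball_obtain_coords:
  assumes "is_dball S"
  obtains X where "dball_coords S X"
  using assms unfolding is_dball_def dball_coords_def by blast

lemma dball_coords_determine: "dball_coords S X \<Longrightarrow> S = dball_of_coords X"
  unfolding dball_coords_def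
  by (auto simp: dball_of_ball_coords dball_of_neg_ball_coords dball_of_halfspace_coords)

lemma lorentz_form_dball_coords_self: "dball_coords S X \<Longrightarrow> lorentz_form X X = 1"
  unfolding dball_coords_def
  by (auto simp: lorentz_form_ball_coords_self lorentz_form_halfspace_coords_self
      lorentz_form_minus_left lorentz_form_minus_right)

lemma finite_part_Some_image [simp]: "finite_part (Some ` S) = S"
  unfolding finite_part_def by auto

lemma finite_part_insert_None [simp]: "finite_part (insert None S) = finite_part S"
  unfolding finite_part_def by auto

lemma interior_complement_ball:
  fixes c :: "'a::real_normed_vector"
  shows "r > 0 \<Longrightarrow> interior (- ball c r) = - cball c r"
  by (simp add: interior_complement)

lemma tangent_ball_dball_coords:
  assumes r: "r > 0" and T: "dball_coords T Y"
    and disj: "ball c r \<inter> interior (finite_part T) = {}"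
    and p: "p \<in> Some ` cball c r" "p \<in> T"
  shows "lorentz_form (ball_coords c r) Y = -1"
  using T unfolding dball_coords_def
proof (elim disjE exE conjE)
  fix c' r' assume "r' > 0" "T = Some ` cball c' r'" "Y = ball_coords c' r'"
  then show ?thesis using tangent_balls_coords[OF r] disj p by auto
next
  fix c' r' assume "r' > 0" "T = insert None (Some ` (- ball c' r'))" "Y = - ball_coords c' r'"
  then show ?thesis
    using tangent_ball_exterior_coords[OF r] disj p by (auto simp: interior_complement_ball)
next
  fix a b assume "a \<noteq> 0" "T = insert None (Some ` {x. a \<bullet> x \<le> b})" "Y = halfspace_coords a b"
  then show ?thesis using tangent_ball_halfspace_coords[OF r] disj p by auto
qed

lemma tangent_exterior_dball_coords:
  assumes r: "r > 0" and T: "dball_coords T Y"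
    and disj: "- cball c r \<inter> interior (finite_part T) = {}"
    and p: "p \<in> insert None (Some ` (- ball c r))" "p \<in> T"
  shows "lorentz_form (- ball_coords c r) Y = -1"
  using T unfolding dball_coords_def
proof (elim disjE exE conjE)
  fix c' r' assume "r' > 0" "T = Some ` cball c' r'" "Y = ball_coords c' r'"
  then have "lorentz_form Y (- ball_coords c r) = -1"
    using tangent_ball_exterior_coords[OF _ r] disj p by (auto simp: Int_commute)
  then show ?thesis by (simp only: lorentz_form_commute)
next
  fix c' r' assume "r' > 0" "T = insert None (Some ` (- ball c' r'))"
  then show ?thesis
    using disj exteriors_of_cballs_intersect[of c r c' r'] by (simp add: interior_complement_ball)
next
  fix a b assume "a \<noteq> 0" "T = insert None (Some ` {x. a \<bullet> x \<le> b})"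
  then show ?thesis using disj exterior_of_cball_halfspace_intersect[of a c r b] by simp
qed

lemma tangent_halfspace_dball_coords:
  assumes a: "a \<noteq> 0" and T: "dball_coords T Y"
    and disj: "{x. a \<bullet> x < b} \<inter> interior (finite_part T) = {}"
    and p: "p \<in> insert None (Some ` {x. a \<bullet> x \<le> b})" "p \<in> T"
  shows "lorentz_form (halfspace_coords a b) Y = -1"
  using T unfolding dball_coords_def
proof (elim disjE exE conjE)
  fix c r assume "r > 0" "T = Some ` cball c r" "Y = ball_coords c r"
  then have "lorentz_form Y (halfspace_coords a b) = -1"
    using tangent_ball_halfspace_coords[OF _ a] disj p by (auto simp: Int_commute)
  then show ?thesis by (simp only: lorentz_form_commute)
next
  fix c r assume "r > 0" "T = insert None (Some ` (- ball c r))"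
  then show ?thesis
    using disj exterior_of_cball_halfspace_intersect[OF a, of c r b]
    by (auto simp: interior_complement_ball)
next
  fix a' b' assume "a' \<noteq> 0" "T = insert None (Some ` {x. a' \<bullet> x \<le> b'})"
    "Y = halfspace_coords a' b'"
  then show ?thesis using tangent_halfspaces_coords[OF a] disj by simp
qed

lemma tangent_dball_coords:
  assumes S: "dball_coords S X" and T: "dball_coords T Y" and disj: "disjoint_interiors S T"
    and p: "p \<in> S" "p \<in> T"
  shows "lorentz_form X Y = -1"
  using S unfolding dball_coords_def
proof (elim disjE exE conjE)
  fix c r assume "r > 0" "S = Some ` cball c r" "X = ball_coords c r"
  then show ?thesis
    using tangent_ball_dball_coords[OF _ T] disj p by (simp add: disjoint_interiors_def)
next
  fix c r assume "r > 0" "S = insert None (Some ` (- ball c r))" "X = - ball_coords c r"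
  then show ?thesis
    using tangent_exterior_dball_coords[OF _ T] disj p
    by (simp add: disjoint_interiors_def interior_complement_ball)
next
  fix a b assume "a \<noteq> 0" "S = insert None (Some ` {x. a \<bullet> x \<le> b})" "X = halfspace_coords a b"
  then show ?thesis
    using tangent_halfspace_dball_coords[OF _ T] disj p by (simp add: disjoint_interiors_def)
qed

lemma two_points_on_sphere:
  fixes c :: "real^'n::finite"
  assumes "r > 0"
  obtains p q where "p \<noteq> q" "p \<in> sphere c r" "q \<in> sphere c r"
proof -
  define e :: "real^'n" where "e = axis undefined 1"
  have "(c + r *\<^sub>R e) $ undefined \<noteq> (c - r *\<^sub>R e) $ undefined"
    using assms by (simp add: e_def)
  then have "c + r *\<^sub>R e \<noteq> c - r *\<^sub>R e" by metis
  moreover have "c + r *\<^sub>R e \<in> sphere c r" "c - r *\<^sub>R e \<in> sphere c r"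
    using assms by (simp_all add: dist_norm e_def)
  ultimately show thesis by (rule that)
qed

lemma opposite_dball_coords_meet_twice:
  assumes S: "dball_coords S X" and T: "dball_coords T (- X)"
  obtains p q where "p \<noteq> q" "p \<in> S" "p \<in> T" "q \<in> S" "q \<in> T"
proof -
  have T_eq: "T = dball_of_coords (- X)" using T by (rule dball_coords_determine)
  show thesis using S unfolding dball_coords_def
  proof (elim disjE exE conjE)
    fix c r assume "r > 0" "S = Some ` cball c r" "X = ball_coords c r"
    moreover obtain p q where "p \<noteq> q" "p \<in> sphere c r" "q \<in> sphere c r"
      using two_points_on_sphere[OF \<open>r > 0\<close>] .
    ultimately show thesis
      using that[of "Some p" "Some q"] T_eq by (auto simp: dball_of_neg_ball_coords)
  next
    fix c r assume "r > 0" "S = insert None (Some ` (- ball c r))" "X = - ball_coords c r"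
    moreover obtain p q where "p \<noteq> q" "p \<in> sphere c r" "q \<in> sphere c r"
      using two_points_on_sphere[OF \<open>r > 0\<close>] .
    ultimately show thesis
      using that[of "Some p" "Some q"] T_eq by (auto simp: dball_of_ball_coords)
  next
    fix a b assume a: "a \<noteq> 0" "S = insert None (Some ` {x. a \<bullet> x \<le> b})"
      "X = halfspace_coords a b"
    moreover have "a \<bullet> ((b / (a \<bullet> a)) *\<^sub>R a) = b" using a by simp
    ultimately show thesis
      using that[of None "Some ((b / (a \<bullet> a)) *\<^sub>R a)"] T_eq
      by (auto simp: dball_of_neg_halfspace_coords)
  qed
qed

section \<open>Ball packings of the clique join\<close>

lemma touching_dball_coords:
  assumes S: "dball_coords S X" and T: "dball_coords T Y" and disj: "disjoint_interiors S T"
    and touch: "\<exists>!p. p \<in> S \<inter> T"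
  shows "lorentz_form X Y = -1" and "Y \<noteq> - X"
proof -
  obtain p where p: "p \<in> S \<inter> T" and unique: "\<forall>q. q \<in> S \<inter> T \<longrightarrow> q = p"
    using touch by (rule ex1E)
  show "lorentz_form X Y = -1" using tangent_dball_coords[OF S T disj] p by blast
  show "Y \<noteq> - X"
  proof
    assume "Y = - X"
    then obtain q q' where "q \<noteq> q'" "q \<in> S" "q \<in> T" "q' \<in> S" "q' \<in> T"
      using opposite_dball_coords_meet_twice[OF S] T by blast
    then show False using unique by blast
  qed
qed

lemma ball_packable_obtain_lorentz_coords:
  fixes B :: "'v \<Rightarrow> (real^'n::finite) option set"
  assumes "ball_packable V E B"
  obtains X :: "'v \<Rightarrow> 'n lorentz"
  where "inj_on X V" "\<And>v. v \<in> V \<Longrightarrow> lorentz_form (X v) (X v) = 1"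
    "\<And>u v. u \<in> V \<Longrightarrow> v \<in> V \<Longrightarrow> u \<noteq> v \<Longrightarrow> E u v \<Longrightarrow> lorentz_form (X u) (X v) = -1"
    "\<And>u v. u \<in> V \<Longrightarrow> v \<in> V \<Longrightarrow> u \<noteq> v \<Longrightarrow> E u v \<Longrightarrow> X v \<noteq> - X u"
proof -
  have packing: "inj_on B V" "\<And>v. v \<in> V \<Longrightarrow> is_dball (B v)"
    "\<And>u v. u \<in> V \<Longrightarrow> v \<in> V \<Longrightarrow> u \<noteq> v \<Longrightarrow> disjoint_interiors (B u) (B v)"
    "\<And>u v. u \<in> V \<Longrightarrow> v \<in> V \<Longrightarrow> u \<noteq> v \<Longrightarrow> E u v \<Longrightarrow> \<exists>!p. p \<in> B u \<inter> B v"
    using assms by (simp_all add: ball_packable_def)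
  define X where "X v = (SOME X. dball_coords (B v) X)" for v
  have coords: "dball_coords (B v) (X v)" if "v \<in> V" for v
  proof -
    have "\<exists>X. dball_coords (B v) X"
      by (rule is_dball_obtain_coords[OF packing(2)[OF that]]) blast
    then show ?thesis unfolding X_def by (rule someI_ex)
  qed
  have "inj_on X V"
  proof (rule inj_onI)
    fix u v assume "u \<in> V" "v \<in> V" "X u = X v"
    then have "B u = B v" using dball_coords_determine[OF coords] by metis
    then show "u = v" using \<open>u \<in> V\<close> \<open>v \<in> V\<close> by (rule inj_onD[OF packing(1)])
  qed
  then show thesis
    using that lorentz_form_dball_coords_self[OF coords]
      touching_dball_coords[OF coords coords packing(3) packing(4)]
    by simp
qed

lemma lorentz_coords_clique_join:
  fixes X :: "'v \<Rightarrow> 'n::finite lorentz"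
  assumes unit: "\<And>v. v \<in> A \<union> C \<Longrightarrow> lorentz_form (X v) (X v) = 1"
    and touching: "\<And>u v. u \<in> A \<union> C \<Longrightarrow> v \<in> A \<union> C \<Longrightarrow> u \<noteq> v \<Longrightarrow> E u v \<Longrightarrow>
      lorentz_form (X u) (X v) = -1"
    and "A \<inter> C = {}"
    and clique: "\<And>u v. u \<in> A \<Longrightarrow> v \<in> A \<Longrightarrow> u \<noteq> v \<Longrightarrow> E u v"
    and join: "\<And>u v. u \<in> A \<Longrightarrow> v \<in> C \<Longrightarrow> E u v"
  shows "mutually_tangent A X" and "c \<in> C \<Longrightarrow> tangent_to_all A X (X c)"
proof -
  show "mutually_tangent A X"
    unfolding mutually_tangent_def
  proof (intro ballI)
    fix i j assume "i \<in> A" "j \<in> A"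
    then show "lorentz_form (X i) (X j) = (if i = j then 1 else -1)"
      using unit[of i] touching[of i j] clique[of i j] by auto
  qed
  assume "c \<in> C"
  show "tangent_to_all A X (X c)"
    unfolding tangent_to_all_def
  proof (intro conjI ballI)
    show "lorentz_form (X c) (X c) = 1" using unit \<open>c \<in> C\<close> by simp
    fix j assume "j \<in> A"
    then have "lorentz_form (X j) (X c) = -1"
      using touching[of j c] join[of j c] \<open>c \<in> C\<close> \<open>A \<inter> C = {}\<close> by auto
    then show "lorentz_form (X c) (X j) = -1" by (simp add: lorentz_form_commute)
  qed
qed

theorem corollary3p5:
  fixes V :: "'v set" and E :: "'v \<Rightarrow> 'v \<Rightarrow> bool" and A C :: "'v set"
  assumes "finite V"
    and "\<And>u v. E u v \<Longrightarrow> u \<in> V \<and> v \<in> V"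
    and "\<And>u v. E u v \<Longrightarrow> E v u"
    and "\<And>v. \<not> E v v"
    and "V = A \<union> C" and "A \<inter> C = {}"
    and "card A = CARD('n::finite) + 1" and "card C = 3"
    and "\<And>u v. u \<in> A \<Longrightarrow> v \<in> A \<Longrightarrow> u \<noteq> v \<Longrightarrow> E u v"
    and "\<And>u v. u \<in> A \<Longrightarrow> v \<in> C \<Longrightarrow> E u v"
  shows "\<not> dball_packable TYPE('n) V E"
proof
  assume "dball_packable TYPE('n) V E"
  then obtain B :: "'v \<Rightarrow> (real^'n) option set" where "ball_packable V E B"
    unfolding dball_packable_def by blast
  then obtain X :: "'v \<Rightarrow> 'n lorentz" where X: "inj_on X V"
    "\<And>v. v \<in> V \<Longrightarrow> lorentz_form (X v) (X v) = 1"
    "\<And>u v. u \<in> V \<Longrightarrow> v \<in> V \<Longrightarrow> u \<noteq> v \<Longrightarrow> E u v \<Longrightarrow> lorentz_form (X u) (X v) = -1"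
    "\<And>u v. u \<in> V \<Longrightarrow> v \<in> V \<Longrightarrow> u \<noteq> v \<Longrightarrow> E u v \<Longrightarrow> X v \<noteq> - X u"
    by (rule ball_packable_obtain_lorentz_coords) (rule that)
  note clique_join = lorentz_coords_clique_join[of A C X E, OF X(2,3)[unfolded assms(5)] assms(6,9,10)]
  obtain c\<^sub>1 c\<^sub>2 c\<^sub>3 where C: "C = {c\<^sub>1, c\<^sub>2, c\<^sub>3}" "c\<^sub>1 \<noteq> c\<^sub>2" "c\<^sub>2 \<noteq> c\<^sub>3" "c\<^sub>1 \<noteq> c\<^sub>3"
    using assms(8) by (auto simp: card_3_iff)
  have "X c\<^sub>1 = X c\<^sub>2 \<or> X c\<^sub>2 = X c\<^sub>3 \<or> X c\<^sub>1 = X c\<^sub>3"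
  proof (rule tangent_to_all_at_most_two[OF clique_join(1) _ assms(7)])
    show "finite A" using assms(1,5) by simp
    show "X j \<noteq> - X i" if "i \<in> A" "j \<in> A" "i \<noteq> j" for i j
      using X(4)[of i j] assms(5) assms(9)[of i j] that by simp
    show "tangent_to_all A X p" if "p \<in> {X c\<^sub>1, X c\<^sub>2, X c\<^sub>3}" for p
      using clique_join(2) that C(1) by auto
  qed
  moreover have "X c\<^sub>1 \<noteq> X c\<^sub>2" "X c\<^sub>2 \<noteq> X c\<^sub>3" "X c\<^sub>1 \<noteq> X c\<^sub>3"
    using inj_on_contraD[OF X(1)] C assms(5) by auto
  ultimately show False by simp
qed

end
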